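(* Let $G$ be a finite, simple, connected $(q+1)$-regular graph with $n$ vertices and $m$ edges, let $a\in[0,1]$ and $b\in\mathbb R$, and set $\eta=(1-q)a+b(q+1)$ and $\sigma=b((1-q)a+bq)$. Then the $(a,b)$-zeta function of $G$ satisfies \begin{align*} \mathbf Z_{a,b}(G,u)^{-1}&=(1-b^2u^2)^{m-n}\det\big((1+\sigma u^2)\mathbf I_n-\eta u\mathbf P(G)\big)\\ &=(1-b^2u^2)^{m-n}\det\Big((1-\eta u+\sigma u^2)\mathbf I_n+\frac{\eta u}{q+1}\Delta\Big), \end{align*} where $\Delta=\mathbf D-\mathbf A(G)$ is the Laplacian of $G$.
   Context: $D(G)$ is the set of $2m$ arcs of $G$ (for each edge $uv$, both $(u,v)$ and $(v,u)$); for $e=(u,v)$, $o(e)=u$, $t(e)=v$, $e^{-1}=(v,u)$, and $d_v=\deg v$. The generalized Grover matrix $\tilde{\mathbf U}=(\tilde U_{ef})_{e,f\in D(G)}$ has $\tilde U_{ef}=(2/d_{t(f)}-1)a+b$ if $t(f)=o(e)$ and $f\ne e^{-1}$; $\tilde U_{ef}=(2/d_{t(f)}-1)a$ if $f=e^{-1}$; $0$ otherwise. The $(a,b)$-zeta function is defined by $\mathbf Z_{a,b}(G,u)^{-1}=\det(\mathbf I_{2m}-u\tilde{\mathbf U})$. $\mathbf P(G)$ has entries $P_{uv}=1/\deg u$ if $u,v$ adjacent and $0$ otherwise; $\mathbf D$ is the diagonal degree matrix and $\mathbf A(G)$ the adjacency matrix. *)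

theory Defs
  imports "HOL-Analysis.Analysis"
begin

text \<open>A finite simple graph on the finite vertex type 'v is given by a symmetric,
irreflexive adjacency relation E.\<close>

definition deg :: "('v \<Rightarrow> 'v \<Rightarrow> bool) \<Rightarrow> 'v \<Rightarrow> nat" where
  "deg E v = card {w. E v w}"

definition arcs :: "('v \<Rightarrow> 'v \<Rightarrow> bool) \<Rightarrow> ('v \<times> 'v) set" where
  "arcs E = {(x, y). E x y}"

definition num_edges :: "('v::finite \<Rightarrow> 'v \<Rightarrow> bool) \<Rightarrow> nat" where
  "num_edges E = card (arcs E) div 2"

text \<open>Generalized Grover matrix; for an arc e, o(e) = fst e, t(e) = snd e,
e^{-1} = prod.swap e.\<close>
definition grover :: "real \<Rightarrow> real \<Rightarrow> ('v \<Rightarrow> 'v \<Rightarrow> bool) \<Rightarrow> ('v \<times> 'v) \<Rightarrow> ('v \<times> 'v) \<Rightarrow> real" where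
  "grover a b E e f =
     (if f = prod.swap e then (2 / real (deg E (snd f)) - 1) * a
      else if snd f = fst e then (2 / real (deg E (snd f)) - 1) * a + b
      else 0)"

definition det_on :: "'i set \<Rightarrow> ('i \<Rightarrow> 'i \<Rightarrow> real) \<Rightarrow> real" where
  "det_on S M = (\<Sum>p\<in>{p. p permutes S}. of_int (sign p) * (\<Prod>i\<in>S. M i (p i)))"

definition zeta_inv :: "real \<Rightarrow> real \<Rightarrow> ('v \<Rightarrow> 'v \<Rightarrow> bool) \<Rightarrow> real \<Rightarrow> real" where
  "zeta_inv a b E u =
     det_on (arcs E) (\<lambda>e f. (if e = f then 1 else 0) - u * grover a b E e f)"

definition adj_mat :: "('v::finite \<Rightarrow> 'v \<Rightarrow> bool) \<Rightarrow> real^'v^'v" where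
  "adj_mat E = (\<chi> i j. if E i j then 1 else 0)"

definition deg_mat :: "('v::finite \<Rightarrow> 'v \<Rightarrow> bool) \<Rightarrow> real^'v^'v" where
  "deg_mat E = (\<chi> i j. if i = j then real (deg E i) else 0)"

definition trans_mat :: "('v::finite \<Rightarrow> 'v \<Rightarrow> bool) \<Rightarrow> real^'v^'v" where
  "trans_mat E = (\<chi> i j. if E i j then 1 / real (deg E i) else 0)"

definition laplacian :: "('v::finite \<Rightarrow> 'v \<Rightarrow> bool) \<Rightarrow> real^'v^'v" where
  "laplacian E = deg_mat E - adj_mat E"

end

theory Submission
  imports Defs
begin

(* Write J for the arc reversal, B = S T for the arc transition matrix (S: arc to its origin,
   T: vertex to its incoming arcs) and s = b u. For a (q+1)-regular graph the Grover matrix is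
   B (2a/(q+1) - a + b) - b J, so I - u U = I + s J - beta B. Multiplying by I - s J, and using
   J^2 = I on arcs and (I - s^2 I) S = (1 - s^2) S, gives
   (I + s J - beta B)(I - s J) = (1 - s^2)(I - X Y) with X = beta/(1 - s^2) S and Y = T (I - s J),
   both of square zero. Then det (I - X Y) = det (I - Y X), and Y X lives on vertices:
   T S = A and T J S = D. Since det (I - s J) = (1 - s^2)^m, this leaves
   (1 - s^2)^m det (I - beta/(1 - s^2) (A - s D)), which for D = (q+1) I is the stated formula. *)

lemma det_on_UNIV: "det_on UNIV (\<lambda>i j. A $ i $ j) = det A"
  unfolding det_on_def det_def by simp

lemma det_on_eq_det_on_UNIV:
  fixes S :: "'i::finite set"
  shows "det_on S M = det_on UNIV (\<lambda>i j. if i \<in> S \<and> j \<in> S then M i j else of_bool (i = j))"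
    (is "_ = det_on UNIV ?N")
  unfolding det_on_def
proof (rule sum.mono_neutral_cong_left)
  show "{p. p permutes S} \<subseteq> {p. p permutes UNIV}"
    using permutes_subset by blast
  show "\<forall>p \<in> {p. p permutes UNIV} - {p. p permutes S}. of_int (sign p) * (\<Prod>i\<in>UNIV. ?N i (p i)) = 0"
  proof
    fix p assume "p \<in> {p. p permutes UNIV} - {p. p permutes S}"
    then obtain i where "i \<notin> S" "p i \<noteq> i"
      by (auto simp: permutes_def)
    then have "(\<Prod>i\<in>UNIV. ?N i (p i)) = 0"
      by (intro prod_zero bexI[of _ i]) auto
    then show "of_int (sign p) * (\<Prod>i\<in>UNIV. ?N i (p i)) = 0"
      by simp
  qed
  show "of_int (sign p) * (\<Prod>i\<in>S. M i (p i)) = of_int (sign p) * (\<Prod>i\<in>UNIV. ?N i (p i))"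
    if "p \<in> {p. p permutes S}" for p
  proof -
    have p: "p permutes S" using that by simp
    have "(\<Prod>i\<in>UNIV. ?N i (p i)) = (\<Prod>i\<in>S. ?N i (p i))"
      by (rule prod.mono_neutral_right) (auto simp: permutes_not_in[OF p])
    also have "\<dots> = (\<Prod>i\<in>S. M i (p i))"
      by (rule prod.cong) (auto simp: permutes_in_image[OF p])
    finally show ?thesis by simp
  qed
qed simp

lemma det_on_image:
  assumes f: "inj_on f A" and A: "finite A"
  shows "det_on (f ` A) M = det_on A (\<lambda>i j. M (f i) (f j))"
proof -
  have bij: "bij_betw f A (f ` A)" using f by (simp add: bij_betw_imageI)
  have bij_inv: "bij_betw (inv_into A f) (f ` A) A" by (rule bij_betw_inv_into[OF bij])
  have "det_on A (\<lambda>i j. M (f i) (f j)) =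
        (\<Sum>p\<in>{p. p permutes A}. of_int (sign (map_permutation A f p)) *
           (\<Prod>i\<in>f ` A. M i (map_permutation A f p i)))"
    unfolding det_on_def
  proof (rule sum.cong[OF refl])
    fix p assume "p \<in> {p. p permutes A}"
    then have p: "p permutes A" by simp
    have "(\<Prod>i\<in>f ` A. M i (map_permutation A f p i)) = (\<Prod>i\<in>A. M (f i) (f (p i)))"
      by (simp add: prod.reindex[OF f] map_permutation_apply[OF f] permutes_in_image[OF p])
    then show "of_int (sign p) * (\<Prod>i\<in>A. M (f i) (f (p i))) =
      of_int (sign (map_permutation A f p)) * (\<Prod>i\<in>f ` A. M i (map_permutation A f p i))"
      using sign_map_permutation[OF f p A] by simp
  qed
  also have "\<dots> = det_on (f ` A) M"
    unfolding det_on_def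
  proof (rule sum.reindex_bij_witness[where j = "map_permutation A f"
        and i = "map_permutation (f ` A) (inv_into A f)"])
    fix p assume "p \<in> {p. p permutes f ` A}"
    then have p: "p permutes f ` A" by simp
    show "map_permutation (f ` A) (inv_into A f) p \<in> {p. p permutes A}"
      using map_permutation_permutes[OF bij_inv p] by simp
    show "map_permutation A f (map_permutation (f ` A) (inv_into A f) p) = p"
      by (rule map_permutation_compose_inv[OF bij_inv p]) (simp add: f_inv_into_f)
  next
    fix p assume "p \<in> {p. p permutes A}"
    then have p: "p permutes A" by simp
    show "map_permutation (f ` A) (inv_into A f) (map_permutation A f p) = p"
      by (rule map_permutation_compose_inv[OF bij p]) (simp add: inv_into_f_f[OF f])
    show "map_permutation A f p \<in> {p. p permutes f ` A}"
      using map_permutation_permutes[OF bij p] by simp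
  qed simp
  finally show ?thesis ..
qed

lemma matrix_add_rdistrib: "((A::real^'n^'m) + B) ** (C::real^'p^'n) = A ** C + B ** C"
  by (vector matrix_matrix_mult_def sum.distrib[symmetric] field_simps)

lemma matrix_diff_ldistrib: "(A::real^'n^'m) ** ((B::real^'p^'n) - C) = A ** B - A ** C"
  by (vector matrix_matrix_mult_def sum_subtractf[symmetric] field_simps)

lemma matrix_diff_rdistrib: "((A::real^'n^'m) - B) ** (C::real^'p^'n) = A ** C - B ** C"
  by (vector matrix_matrix_mult_def sum_subtractf[symmetric] field_simps)

lemma matrix_scaleR_mult_right: "(A::real^'n^'m) ** (c *\<^sub>R (B::real^'p^'n)) = c *\<^sub>R (A ** B)"
  by (simp add: matrix_scalar_ac scalar_matrix_assoc)

lemmas matrix_mult_simps = matrix_add_ldistrib matrix_add_rdistrib matrix_diff_ldistrib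
  matrix_diff_rdistrib scalar_matrix_assoc[symmetric] matrix_scaleR_mult_right

lemma det_scaleR: "det (c *\<^sub>R (A::real^'n^'n)) = c ^ CARD('n) * det A"
proof -
  have "c *\<^sub>R A = mat c ** A"
    by (simp add: vec_eq_iff matrix_matrix_mult_def mat_def if_distrib if_distribR cong: if_cong)
  then show ?thesis
    by (simp add: det_mul det_diagonal mat_def)
qed

lemma det_one_plus_off_block:
  fixes N :: "real^'n^'n"
  assumes N: "\<And>i j. N$i$j \<noteq> 0 \<Longrightarrow> i \<in> H \<and> j \<notin> H"
  shows "det (mat 1 + N) = 1"
proof -
  let ?M = "mat 1 + N"
  have "det ?M = (\<Sum>p\<in>{id}. of_int (sign p) * (\<Prod>i\<in>UNIV. ?M$i$p i))"
    unfolding det_def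
  proof (rule sum.mono_neutral_right)
    show "\<forall>p \<in> {p. p permutes UNIV} - {id}. of_int (sign p) * (\<Prod>i\<in>UNIV. ?M$i$p i) = 0"
    proof
      fix p assume "p \<in> {p. p permutes (UNIV::'n set)} - {id}"
      then have "inj p" and "p \<noteq> id" by (auto dest: permutes_inj)
      then obtain i where i: "p i \<noteq> i" and pi: "p (p i) \<noteq> p i"
        by (metis eq_id_iff injD)
      \<comment> \<open>otherwise \<open>N$i$p i \<noteq> 0\<close> and \<open>N$(p i)$p (p i) \<noteq> 0\<close>, i.e. \<open>p i \<notin> H\<close> and \<open>p i \<in> H\<close>\<close>
      have "?M$i$p i = 0 \<or> ?M$(p i)$p (p i) = 0"
        using N[of i "p i"] N[of "p i" "p (p i)"] i pi by (auto simp: mat_def)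
      then show "of_int (sign p) * (\<Prod>i\<in>UNIV. ?M$i$p i) = 0"
        by (auto simp: prod_zero_iff)
    qed
  qed (simp_all add: permutes_id)
  also have "\<dots> = 1"
    using N by (force simp: mat_def intro: prod.neutral)
  finally show ?thesis .
qed

lemma det_one_minus_mult_commute:
  fixes X Y :: "real^'n^'n"
  assumes X: "X ** X = 0" and Y: "Y ** Y = 0"
  shows "det (mat 1 - X ** Y) = det (mat 1 - Y ** X)"
proof -
  \<comment> \<open>\<open>(1 + X)(1 - XY)(1 + Y) = 1 + X + Y = (1 + Y)(1 - YX)(1 + X)\<close>, and \<open>1 \<pm> X\<close> are mutually inverse\<close>
  have inv: "det (mat 1 + Z) * det (mat 1 - Z) = 1" if "Z ** Z = 0" for Z :: "real^'n^'n"
    using that by (simp add: det_mul[symmetric] matrix_mult_simps)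
  have "(mat 1 + X) ** ((mat 1 - X ** Y) ** (mat 1 + Y)) = mat 1 + X + Y"
       "(mat 1 + Y) ** ((mat 1 - Y ** X) ** (mat 1 + X)) = mat 1 + X + Y"
    using X Y by (simp_all add: matrix_mult_simps matrix_mul_assoc algebra_simps,
        simp_all add: matrix_mul_assoc[symmetric])
  then have "det (mat 1 + X) * (det (mat 1 - X ** Y) * det (mat 1 + Y)) =
             det (mat 1 + Y) * (det (mat 1 - Y ** X) * det (mat 1 + X))"
    by (metis det_mul)
  moreover have "det (mat 1 + X) \<noteq> 0" "det (mat 1 + Y) \<noteq> 0"
    using inv[OF X] inv[OF Y] by auto
  ultimately show ?thesis
    by (simp add: algebra_simps)
qed

definition rel_mat :: "('i::finite \<Rightarrow> 'j::finite \<Rightarrow> bool) \<Rightarrow> real^'j^'i" where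
  "rel_mat R = (\<chi> i j. of_bool (R i j))"

lemma rel_mat_mult: "rel_mat R ** rel_mat S = (\<chi> i j. real (card {k. R i k \<and> S k j}))"
  by (simp add: vec_eq_iff matrix_matrix_mult_def rel_mat_def of_bool_conj[symmetric]
      Collect_conj_eq[symmetric])

lemma rel_mat_mult_left_functional:
  "rel_mat (\<lambda>i k. P i \<and> k = f i) ** rel_mat S = rel_mat (\<lambda>i j. P i \<and> S (f i) j)"
  unfolding rel_mat_mult by (simp add: rel_mat_def vec_eq_iff Collect_conv_if)

lemma rel_mat_mult_right_functional:
  "rel_mat R ** rel_mat (\<lambda>k j. Q j \<and> k = g j) = rel_mat (\<lambda>i j. Q j \<and> R i (g j))"
  unfolding rel_mat_mult by (auto simp: rel_mat_def vec_eq_iff Collect_conv_if)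

lemma rel_mat_eq_0: "(\<And>i j. \<not> R i j) \<Longrightarrow> rel_mat R = 0"
  by (simp add: vec_eq_iff rel_mat_def)

lemma transpose_rel_mat: "transpose (rel_mat R) = rel_mat (\<lambda>i j. R j i)"
  by (simp add: vec_eq_iff rel_mat_def transpose_def)

lemma det_one_minus_scaleR_rel_mat_Id_on:
  "det (mat 1 - c *\<^sub>R rel_mat (\<lambda>i j. i \<in> A \<and> j = i)) = (1 - c) ^ card A"
proof -
  have "det (mat 1 - c *\<^sub>R rel_mat (\<lambda>i j. i \<in> A \<and> j = i)) = (\<Prod>i\<in>UNIV. if i \<in> A then 1 - c else 1)"
    by (subst det_diagonal) (auto simp: rel_mat_def mat_def intro!: prod.cong)
  then show ?thesis
    by (simp add: prod.If_cases)
qed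

lemma fixpoint_free_involution_halves:
  fixes \<rho> :: "'i::finite \<Rightarrow> 'i"
  assumes closed: "\<And>e. e \<in> A \<Longrightarrow> \<rho> e \<in> A"
    and involutive: "\<And>e. e \<in> A \<Longrightarrow> \<rho> (\<rho> e) = e"
    and fixpoint_free: "\<And>e. e \<in> A \<Longrightarrow> \<rho> e \<noteq> e"
  obtains H where "H \<subseteq> A" "\<rho> ` H = A - H" "card A = 2 * card H"
proof -
  obtain g :: "'i \<Rightarrow> nat" where g: "inj g"
    using finite_imp_inj_to_nat_seg[of "UNIV :: 'i set"] by auto
  define H where "H = {e \<in> A. g e < g (\<rho> e)}"
  have "g (\<rho> e) \<noteq> g e" if "e \<in> A" for e
    using fixpoint_free[OF that] g by (auto dest: injD)
  then have image: "\<rho> ` H = A - H"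
    using closed involutive by (auto simp: H_def image_iff) (metis not_less_iff_gr_or_eq)
  have "inj_on \<rho> H"
    by (rule inj_on_inverseI[of _ \<rho>]) (simp add: H_def involutive)
  then have "card (A - H) = card H"
    by (simp flip: image card_image)
  moreover have "H \<subseteq> A" by (auto simp: H_def)
  then have "card A = card H + card (A - H)"
    by (simp add: card_Diff_subset card_mono)
  ultimately have "card A = 2 * card H" by simp
  then show ?thesis
    using that image \<open>H \<subseteq> A\<close> by blast
qed

lemma det_one_minus_scaleR_involution:
  fixes \<rho> :: "'i::finite \<Rightarrow> 'i"
  assumes closed: "\<And>e. e \<in> A \<Longrightarrow> \<rho> e \<in> A"
    and involutive: "\<And>e. e \<in> A \<Longrightarrow> \<rho> (\<rho> e) = e"
    and fixpoint_free: "\<And>e. e \<in> A \<Longrightarrow> \<rho> e \<noteq> e"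
  shows "det (mat 1 - s *\<^sub>R rel_mat (\<lambda>e f. e \<in> A \<and> f = \<rho> e)) = (1 - s\<^sup>2) ^ (card A div 2)"
proof -
  obtain H where H: "H \<subseteq> A" "\<rho> ` H = A - H" and card_A: "card A = 2 * card H"
    by (rule fixpoint_free_involution_halves[OF closed involutive fixpoint_free])
  have rho_in_complement: "\<rho> e \<in> A - H" if "e \<in> H" for e
    using imageI[OF that, of \<rho>] H(2) by simp
  have rho_in_H: "\<rho> e \<in> H" if "e \<in> A - H" for e
  proof -
    have "e \<in> \<rho> ` H" using that H(2) by simp
    then obtain h where "h \<in> H" "e = \<rho> h" by (rule imageE)
    then show ?thesis using H(1) involutive by auto
  qed
  define K1 where "K1 = rel_mat (\<lambda>e f. e \<in> H \<and> f = \<rho> e)"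
  define K2 where "K2 = rel_mat (\<lambda>e f. e \<in> A - H \<and> f = \<rho> e)"
  define P where "P = rel_mat (\<lambda>e f. e \<in> H \<and> f = e)"
  have "K1 ** P = 0" "P ** K2 = 0"
    unfolding K1_def K2_def P_def rel_mat_mult_left_functional
    by (auto intro!: rel_mat_eq_0 dest: rho_in_complement)
  moreover have "K1 ** K2 = P"
    unfolding K1_def K2_def P_def rel_mat_mult_left_functional
    by (intro arg_cong[where f = rel_mat] ext) (use rho_in_complement involutive H(1) in auto)
  moreover have "rel_mat (\<lambda>e f. e \<in> A \<and> f = \<rho> e) = K1 + K2"
    using H(1) by (auto simp: K1_def K2_def rel_mat_def vec_eq_iff)
  \<comment> \<open>\<open>1 - s(K\<^sub>1 + K\<^sub>2) = (1 - sK\<^sub>1)(1 - s\<^sup>2P)(1 - sK\<^sub>2)\<close>: two unipotent factors and a diagonal one\<close>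
  ultimately have factor: "mat 1 - s *\<^sub>R rel_mat (\<lambda>e f. e \<in> A \<and> f = \<rho> e) =
      (mat 1 - s *\<^sub>R K1) ** ((mat 1 - s\<^sup>2 *\<^sub>R P) ** (mat 1 - s *\<^sub>R K2))"
    by (simp add: matrix_mult_simps matrix_mul_assoc power2_eq_square algebra_simps)
  have "det (mat 1 + (- s) *\<^sub>R K1) = 1"
    by (rule det_one_plus_off_block[where H = H]) (auto simp: K1_def rel_mat_def dest: rho_in_complement)
  moreover have "det (mat 1 + (- s) *\<^sub>R K2) = 1"
    by (rule det_one_plus_off_block[where H = "A - H"])
      (auto simp: K2_def rel_mat_def intro: rho_in_H)
  moreover have "det (mat 1 - s\<^sup>2 *\<^sub>R P) = (1 - s\<^sup>2) ^ card H"
    unfolding P_def by (rule det_one_minus_scaleR_rel_mat_Id_on)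
  ultimately show ?thesis
    unfolding factor by (simp add: det_mul card_A)
qed

definition diag_embed :: "real^'v::finite^'v \<Rightarrow> real^('v \<times> 'v)^('v \<times> 'v)" where
  "diag_embed M = (\<chi> d d'. if fst d = snd d \<and> fst d' = snd d' then M $ fst d $ fst d' else 0)"

lemma diag_embed_diff: "diag_embed (M - N) = diag_embed M - diag_embed N"
  by (simp add: vec_eq_iff diag_embed_def)

lemma diag_embed_scaleR: "diag_embed (c *\<^sub>R M) = c *\<^sub>R diag_embed M"
  by (simp add: vec_eq_iff diag_embed_def)

lemma det_one_minus_diag_embed:
  fixes M :: "real^'v::finite^'v"
  shows "det (mat 1 - diag_embed M) = det (mat 1 - M)"
proof -
  define D where "D = range (\<lambda>v::'v. (v, v))"
  have in_D: "d \<in> D \<longleftrightarrow> fst d = snd d" for d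
    by (cases d) (auto simp: D_def)
  have "det (mat 1 - diag_embed M) = det_on UNIV (\<lambda>d d'. (mat 1 - diag_embed M) $ d $ d')"
    by (simp only: det_on_UNIV)
  also have "\<dots> = det_on UNIV
      (\<lambda>d d'. if d \<in> D \<and> d' \<in> D then (mat 1 - M) $ fst d $ fst d' else of_bool (d = d'))"
    by (intro arg_cong[where f = "det_on UNIV"] ext) (auto simp: in_D diag_embed_def mat_def)
  also have "\<dots> = det_on D (\<lambda>d d'. (mat 1 - M) $ fst d $ fst d')"
    by (rule det_on_eq_det_on_UNIV[symmetric])
  also have "det_on D (\<lambda>d d'. A $ fst d $ fst d') = det A" for A :: "real^'v^'v"
    unfolding D_def by (subst det_on_image) (auto intro: inj_onI simp: det_on_UNIV)
  finally show ?thesis .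
qed

text \<open>Arcs and vertices share the index type \<open>'v \<times> 'v\<close>: the vertex \<open>v\<close> is the diagonal pair
  \<open>(v, v)\<close>, which is never an arc because \<open>E\<close> is irreflexive.\<close>

lemma in_arcs: "e \<in> arcs E \<longleftrightarrow> E (fst e) (snd e)"
  by (cases e) (simp add: arcs_def)

definition origin_mat :: "('v::finite \<Rightarrow> 'v \<Rightarrow> bool) \<Rightarrow> real^('v \<times> 'v)^('v \<times> 'v)" where
  "origin_mat E = rel_mat (\<lambda>e d. e \<in> arcs E \<and> d = (fst e, fst e))"

definition terminus_mat :: "('v::finite \<Rightarrow> 'v \<Rightarrow> bool) \<Rightarrow> real^('v \<times> 'v)^('v \<times> 'v)" where
  "terminus_mat E = rel_mat (\<lambda>d e. e \<in> arcs E \<and> d = (snd e, snd e))"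

definition reversal_mat :: "('v::finite \<Rightarrow> 'v \<Rightarrow> bool) \<Rightarrow> real^('v \<times> 'v)^('v \<times> 'v)" where
  "reversal_mat E = rel_mat (\<lambda>e f. e \<in> arcs E \<and> f = prod.swap e)"

definition transition_mat :: "('v::finite \<Rightarrow> 'v \<Rightarrow> bool) \<Rightarrow> real^('v \<times> 'v)^('v \<times> 'v)" where
  "transition_mat E = rel_mat (\<lambda>e f. e \<in> arcs E \<and> f \<in> arcs E \<and> snd f = fst e)"

definition grover_mat :: "('v::finite \<Rightarrow> 'v \<Rightarrow> bool) \<Rightarrow> real \<Rightarrow> real \<Rightarrow> real^('v \<times> 'v)^('v \<times> 'v)" where
  "grover_mat E a b = (\<chi> e f. if e \<in> arcs E \<and> f \<in> arcs E then grover a b E e f else 0)"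

lemma zeta_inv_eq_det_grover_mat: "zeta_inv a b E u = det (mat 1 - u *\<^sub>R grover_mat E a b)"
proof -
  have "zeta_inv a b E u = det_on UNIV (\<lambda>e f. if e \<in> arcs E \<and> f \<in> arcs E
      then (if e = f then 1 else 0) - u * grover a b E e f else of_bool (e = f))"
    unfolding zeta_inv_def by (rule det_on_eq_det_on_UNIV)
  also have "\<dots> = det_on UNIV (\<lambda>e f. (mat 1 - u *\<^sub>R grover_mat E a b) $ e $ f)"
    by (intro arg_cong[where f = "det_on UNIV"] ext) (auto simp: grover_mat_def mat_def)
  finally show ?thesis
    by (simp only: det_on_UNIV)
qed

lemma deg_mat_regular: "(\<And>v. deg E v = k) \<Longrightarrow> deg_mat E = real k *\<^sub>R mat 1"
  by (simp add: vec_eq_iff deg_mat_def mat_def)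

lemma trans_mat_regular: "(\<And>v. deg E v = k) \<Longrightarrow> trans_mat E = (1 / real k) *\<^sub>R adj_mat E"
  by (simp add: vec_eq_iff trans_mat_def adj_mat_def)

lemma laplacian_regular: "(\<And>v. deg E v = k) \<Longrightarrow> laplacian E = real k *\<^sub>R mat 1 - adj_mat E"
  by (simp add: laplacian_def deg_mat_regular)

lemma scaleR_laplacian_regular:
  assumes "\<And>v. deg E v = k" and "k \<noteq> 0"
  shows "(x / real k) *\<^sub>R laplacian E = x *\<^sub>R mat 1 - x *\<^sub>R trans_mat E"
  using assms by (simp add: laplacian_regular trans_mat_regular scaleR_diff_right)

context
  fixes E :: "'v::finite \<Rightarrow> 'v \<Rightarrow> bool"
  assumes sym: "\<And>x y. E x y \<Longrightarrow> E y x"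
    and irrefl: "\<And>x. \<not> E x x"
begin

lemma card_in_arcs: "card {e \<in> arcs E. snd e = v} = deg E v"
proof -
  have "{e \<in> arcs E. snd e = v} = (\<lambda>w. (w, v)) ` {w. E v w}"
    using sym by (auto simp: in_arcs)
  then show ?thesis
    unfolding deg_def by (simp add: card_image inj_on_def)
qed

lemma card_arcs: "card (arcs E) = 2 * num_edges E"
  and det_one_minus_scaleR_reversal_mat:
    "det (mat 1 - s *\<^sub>R reversal_mat E) = (1 - s\<^sup>2) ^ num_edges E"
proof -
  have closed: "prod.swap e \<in> arcs E" if "e \<in> arcs E" for e
    using that sym by (simp add: in_arcs)
  have fixpoint_free: "prod.swap e \<noteq> e" if "e \<in> arcs E" for e
    using that irrefl by (cases e) (auto simp: in_arcs)
  show "card (arcs E) = 2 * num_edges E"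
    using fixpoint_free_involution_halves[OF closed _ fixpoint_free]
    unfolding num_edges_def by (metis nonzero_mult_div_cancel_left swap_swap zero_neq_numeral)
  show "det (mat 1 - s *\<^sub>R reversal_mat E) = (1 - s\<^sup>2) ^ num_edges E"
    unfolding reversal_mat_def num_edges_def
    by (rule det_one_minus_scaleR_involution) (use closed fixpoint_free in auto)
qed

lemma grover_mat_regular:
  assumes "\<And>v. deg E v = q + 1"
  shows "grover_mat E a b = ((2 / (real q + 1) - 1) * a + b) *\<^sub>R transition_mat E - b *\<^sub>R reversal_mat E"
  using assms sym
  by (auto simp: vec_eq_iff grover_mat_def grover_def transition_mat_def reversal_mat_def rel_mat_def
      in_arcs)

lemma origin_mult_terminus: "origin_mat E ** terminus_mat E = transition_mat E"
  unfolding origin_mat_def terminus_mat_def transition_mat_def rel_mat_mult_left_functional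
  by (intro arg_cong[where f = rel_mat] ext) auto

lemma reversal_mult_reversal: "reversal_mat E ** reversal_mat E = rel_mat (\<lambda>e f. e \<in> arcs E \<and> f = e)"
  unfolding reversal_mat_def rel_mat_mult_left_functional
  by (intro arg_cong[where f = rel_mat] ext) (auto simp: in_arcs sym)

lemma origin_mult_origin: "origin_mat E ** origin_mat E = 0"
  unfolding origin_mat_def rel_mat_mult_left_functional
  by (rule rel_mat_eq_0) (simp add: in_arcs irrefl)

lemma terminus_mult_terminus: "terminus_mat E ** terminus_mat E = 0"
  unfolding terminus_mat_def rel_mat_mult_right_functional
  by (rule rel_mat_eq_0) (simp add: in_arcs irrefl)

lemma reversal_mult_terminus: "reversal_mat E ** terminus_mat E = 0"
  unfolding reversal_mat_def terminus_mat_def rel_mat_mult_left_functional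
  by (rule rel_mat_eq_0) (auto simp: in_arcs irrefl prod_eq_iff)

lemma Id_on_arcs_mult_origin: "rel_mat (\<lambda>e f. e \<in> arcs E \<and> f = e) ** origin_mat E = origin_mat E"
  unfolding origin_mat_def rel_mat_mult_left_functional by simp

lemma reversal_mult_origin: "reversal_mat E ** origin_mat E = transpose (terminus_mat E)"
  unfolding reversal_mat_def origin_mat_def terminus_mat_def transpose_rel_mat rel_mat_mult_left_functional
  by (intro arg_cong[where f = rel_mat] ext) (auto simp: in_arcs sym)

lemma terminus_mult_origin: "terminus_mat E ** origin_mat E = diag_embed (adj_mat E)"
proof -
  have "(terminus_mat E ** origin_mat E) $ (x, x') $ (y, y') = diag_embed (adj_mat E) $ (x, x') $ (y, y')"
    for x x' y y'
  proof -
    have "{k. (k \<in> arcs E \<and> (x, x') = (snd k, snd k)) \<and> k \<in> arcs E \<and> (y, y') = (fst k, fst k)} =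
        (if x = x' \<and> y = y' \<and> E y x then {(y, x)} else {})"
      by (auto simp: in_arcs)
    then show ?thesis
      unfolding terminus_mat_def origin_mat_def rel_mat_mult vec_lambda_beta
      using sym by (auto simp: diag_embed_def adj_mat_def)
  qed
  then show ?thesis
    by (simp add: vec_eq_iff split_paired_All)
qed

lemma terminus_mult_transpose: "terminus_mat E ** transpose (terminus_mat E) = diag_embed (deg_mat E)"
proof -
  have "(terminus_mat E ** transpose (terminus_mat E)) $ (x, x') $ (y, y') =
      diag_embed (deg_mat E) $ (x, x') $ (y, y')" for x x' y y'
  proof -
    have "{k. (k \<in> arcs E \<and> (x, x') = (snd k, snd k)) \<and> k \<in> arcs E \<and> (y, y') = (snd k, snd k)} =
        (if x = x' \<and> y = y' \<and> x = y then {k \<in> arcs E. snd k = x} else {})"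
      by auto
    then show ?thesis
      unfolding terminus_mat_def transpose_rel_mat rel_mat_mult vec_lambda_beta
      by (simp add: diag_embed_def deg_mat_def card_in_arcs)
  qed
  then show ?thesis
    by (simp add: vec_eq_iff split_paired_All)
qed

lemma det_one_plus_reversal_minus_transition:
  assumes "s\<^sup>2 \<noteq> 1"
  shows "det (mat 1 + s *\<^sub>R reversal_mat E - \<beta> *\<^sub>R transition_mat E) =
    (1 - s\<^sup>2) ^ num_edges E * det (mat 1 - (\<beta> / (1 - s\<^sup>2)) *\<^sub>R (adj_mat E - s *\<^sub>R deg_mat E))"
proof -
  define r where "r = 1 - s\<^sup>2"
  have "r \<noteq> 0"
    using assms by (simp add: r_def)
  define P where "P = rel_mat (\<lambda>e f. e \<in> arcs E \<and> f = e)"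
  define W where "W = mat 1 - s *\<^sub>R reversal_mat E"
  define X where "X = (\<beta> / r) *\<^sub>R origin_mat E"
  define Y where "Y = terminus_mat E ** W"
  have "(mat 1 - s\<^sup>2 *\<^sub>R P) ** origin_mat E = r *\<^sub>R origin_mat E"
    by (simp add: P_def r_def matrix_mult_simps Id_on_arcs_mult_origin algebra_simps)
  then have "(mat 1 - s\<^sup>2 *\<^sub>R P) ** (X ** Y) = (\<beta> / r * r) *\<^sub>R (transition_mat E ** W)"
    unfolding X_def Y_def matrix_scaleR_mult_right scalar_matrix_assoc[symmetric] matrix_mul_assoc
    by (simp only: scalar_matrix_assoc[symmetric] origin_mult_terminus scaleR_scaleR)
  then have "(mat 1 - s\<^sup>2 *\<^sub>R P) ** (X ** Y) = \<beta> *\<^sub>R (transition_mat E ** W)"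
    using \<open>r \<noteq> 0\<close> by simp
  then have factor: "(mat 1 + s *\<^sub>R reversal_mat E - \<beta> *\<^sub>R transition_mat E) ** W =
      (mat 1 - s\<^sup>2 *\<^sub>R P) ** (mat 1 - X ** Y)"
    by (simp add: W_def P_def matrix_mult_simps reversal_mult_reversal power2_eq_square algebra_simps)
  have "X ** X = 0"
    by (simp add: X_def matrix_mult_simps origin_mult_origin)
  moreover have "W ** terminus_mat E = terminus_mat E"
    by (simp add: W_def matrix_mult_simps reversal_mult_terminus)
  then have "Y ** Y = 0"
    by (metis Y_def matrix_mul_assoc terminus_mult_terminus times0_left)
  ultimately have "det (mat 1 - X ** Y) = det (mat 1 - Y ** X)"
    by (rule det_one_minus_mult_commute)
  also have "mat 1 - Y ** X = mat 1 - diag_embed ((\<beta> / r) *\<^sub>R (adj_mat E - s *\<^sub>R deg_mat E))"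
    by (simp add: X_def Y_def W_def matrix_mult_simps matrix_mul_assoc[symmetric] reversal_mult_origin
        terminus_mult_origin terminus_mult_transpose diag_embed_diff diag_embed_scaleR)
  finally have "det (mat 1 - X ** Y) = det (mat 1 - (\<beta> / r) *\<^sub>R (adj_mat E - s *\<^sub>R deg_mat E))"
    by (simp add: det_one_minus_diag_embed)
  moreover have "det W = r ^ num_edges E"
    by (simp add: W_def r_def det_one_minus_scaleR_reversal_mat)
  moreover have "det (mat 1 - s\<^sup>2 *\<^sub>R P) = r ^ num_edges E * r ^ num_edges E"
    by (simp add: P_def r_def det_one_minus_scaleR_rel_mat_Id_on card_arcs power_mult mult_2 power_add)
  ultimately show ?thesis
    using arg_cong[OF factor, of det] \<open>r \<noteq> 0\<close> by (simp add: det_mul r_def)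
qed

lemma zeta_inv_regular:
  fixes a b u :: real
  assumes regular: "\<And>v. deg E v = q + 1" and u: "b\<^sup>2 * u\<^sup>2 \<noteq> 1"
  defines "\<eta> \<equiv> (1 - real q) * a + b * (real q + 1)" and "\<sigma> \<equiv> b * ((1 - real q) * a + b * real q)"
  shows "(1 - b\<^sup>2 * u\<^sup>2) ^ CARD('v) * zeta_inv a b E u =
    (1 - b\<^sup>2 * u\<^sup>2) ^ num_edges E * det ((1 + \<sigma> * u\<^sup>2) *\<^sub>R mat 1 - (\<eta> * u) *\<^sub>R trans_mat E)"
proof -
  define r where "r = 1 - b\<^sup>2 * u\<^sup>2"
  define \<beta> where "\<beta> = u * ((2 / (real q + 1) - 1) * a + b)"
  define V where "V = (mat 1 :: real^'v^'v) - (\<beta> / r) *\<^sub>R (adj_mat E - (u * b) *\<^sub>R deg_mat E)"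
  have "zeta_inv a b E u = det (mat 1 + (u * b) *\<^sub>R reversal_mat E - \<beta> *\<^sub>R transition_mat E)"
    by (simp add: zeta_inv_eq_det_grover_mat grover_mat_regular[OF regular] \<beta>_def algebra_simps)
  also have "\<dots> = r ^ num_edges E * det V"
    using det_one_plus_reversal_minus_transition[of "u * b" \<beta>] u
    by (simp add: r_def V_def power_mult_distrib mult.commute)
  finally have zeta: "zeta_inv a b E u = r ^ num_edges E * det V" .
  have "r \<noteq> 0"
    using u by (simp add: r_def)
  then have "r *\<^sub>R V = (r + \<beta> * (u * b) * (real q + 1)) *\<^sub>R mat 1 - \<beta> *\<^sub>R adj_mat E"
    by (simp add: V_def deg_mat_regular[OF regular] algebra_simps)
  also have "r + \<beta> * (u * b) * (real q + 1) = 1 + \<sigma> * u\<^sup>2"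
    by (simp add: \<beta>_def r_def \<sigma>_def field_simps power2_eq_square)
  also have "\<beta> = (\<eta> * u) * (1 / real (q + 1))"
    by (simp add: \<eta>_def \<beta>_def field_simps)
  finally have "(1 + \<sigma> * u\<^sup>2) *\<^sub>R mat 1 - (\<eta> * u) *\<^sub>R trans_mat E = r *\<^sub>R V"
    by (simp add: trans_mat_regular[OF regular])
  then show ?thesis
    by (simp add: zeta det_scaleR r_def)
qed

end

theorem proposition1:
  fixes E :: "'v::finite \<Rightarrow> 'v \<Rightarrow> bool" and q :: nat and a b u :: real
  assumes sym: "\<And>x y. E x y \<Longrightarrow> E y x"
    and irrefl: "\<And>x. \<not> E x x"
    and connected: "\<And>x y. E\<^sup>*\<^sup>* x y"
    and regular: "\<And>v. deg E v = q + 1"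
    and a: "0 \<le> a" "a \<le> 1"
    and u: "1 - b^2 * u^2 \<noteq> 0"
  shows "let n = CARD('v); m = num_edges E;
             \<eta> = (1 - real q) * a + b * (real q + 1);
             \<sigma> = b * ((1 - real q) * a + b * real q)
         in zeta_inv a b E u
              = (1 - b^2 * u^2) powi (int m - int n)
                * det ((1 + \<sigma> * u^2) *\<^sub>R mat 1 - (\<eta> * u) *\<^sub>R trans_mat E)
          \<and> (1 - b^2 * u^2) powi (int m - int n)
                * det ((1 + \<sigma> * u^2) *\<^sub>R mat 1 - (\<eta> * u) *\<^sub>R trans_mat E)
              = (1 - b^2 * u^2) powi (int m - int n)
                * det ((1 - \<eta> * u + \<sigma> * u^2) *\<^sub>R (mat 1 :: real^'v^'v)
                       + (\<eta> * u / (real q + 1)) *\<^sub>R laplacian E)"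
proof -
  define r where "r = 1 - b\<^sup>2 * u\<^sup>2"
  define \<eta> where "\<eta> = (1 - real q) * a + b * (real q + 1)"
  define \<sigma> where "\<sigma> = b * ((1 - real q) * a + b * real q)"
  have "r \<noteq> 0"
    using u by (simp add: r_def)
  have "r ^ CARD('v) * zeta_inv a b E u =
      r ^ num_edges E * det ((1 + \<sigma> * u\<^sup>2) *\<^sub>R mat 1 - (\<eta> * u) *\<^sub>R trans_mat E)"
    using zeta_inv_regular[OF sym irrefl regular, of b u a] u by (simp add: r_def \<eta>_def \<sigma>_def)
  then have "zeta_inv a b E u =
      r powi (int (num_edges E) - int CARD('v)) * det ((1 + \<sigma> * u\<^sup>2) *\<^sub>R mat 1 - (\<eta> * u) *\<^sub>R trans_mat E)"
    using \<open>r \<noteq> 0\<close> by (simp add: power_int_diff field_simps)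
  moreover have "(1 - \<eta> * u + \<sigma> * u\<^sup>2) *\<^sub>R mat 1 + (\<eta> * u / (real q + 1)) *\<^sub>R laplacian E =
      (1 + \<sigma> * u\<^sup>2) *\<^sub>R (mat 1 :: real^'v^'v) - (\<eta> * u) *\<^sub>R trans_mat E"
    using scaleR_laplacian_regular[OF regular, of "\<eta> * u"] by (simp add: algebra_simps)
  ultimately show ?thesis
    by (simp add: Let_def r_def \<eta>_def \<sigma>_def)
qed

end
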